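(* Let $m\in\mathbb{N}$ and $r\ge0$. For all integers $l,n\ge0$, \[ D^{(r)}_{m}(l+n,x)=\sum_{j=0}^{l}\sum_{k=0}^{n}\binom{n}{k}W^{(r)}_{m}(l,j)\,x^{j}\,(mj)^{n-k}\,D^{(r)}_{m}(k,x). \]
   Context: $(x)_k=x(x-1)\cdots(x-k+1)$. For $m\in\mathbb{N}$ and $r\ge0$, the $r$-Whitney numbers of the second kind $W^{(r)}_{m}(n,k)$ are defined by $(mx+r)^{n}=\sum_{k=0}^{n}W^{(r)}_{m}(n,k)m^{k}(x)_k$ ($n\ge0$), and the $r$-Dowling polynomials are $D^{(r)}_{m}(n,x)=\sum_{k=0}^{n}W^{(r)}_{m}(n,k)x^{k}$. (Here $0^{0}=1$.) *)

theory Defs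
  imports Complex_Main
begin

definition falling_fact :: "real \<Rightarrow> nat \<Rightarrow> real" where
  "falling_fact x k = (\<Prod>i<k. x - of_nat i)"

text \<open>The coefficient row is taken as the unique function vanishing beyond n.\<close>
definition whitney2 :: "nat \<Rightarrow> real \<Rightarrow> nat \<Rightarrow> nat \<Rightarrow> real" where
  "whitney2 m r n = (THE c :: nat \<Rightarrow> real. (\<forall>k>n. c k = 0) \<and>
      (\<forall>x::real. (real m * x + r) ^ n = (\<Sum>k\<le>n. c k * real m ^ k * falling_fact x k)))"

definition dowling :: "nat \<Rightarrow> real \<Rightarrow> nat \<Rightarrow> real \<Rightarrow> real" where
  "dowling m r n x = (\<Sum>k\<le>n. whitney2 m r n k * x ^ k)"

end

theory Submission
  imports Defs
begin

text \<open>The r-Whitney numbers satisfy the triangular recurrence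
  W(n+1,k) = W(n,k-1) + (m k + r) W(n,k), which gives an explicit coefficient row; since the
  falling factorials are linearly independent (test at x = 0, 1, 2, ...), it is the row
  of the definition. Writing (m x + r)^(l+n) = (m x + r)^l (m x + r)^n, expanding the first
  factor and splitting m x + r = (m (x - j) + r) + m j by the binomial theorem, the factor
  (m (x - j) + r)^k expands again in falling factorials of x - j, and
  (x)_j (x - j)_i = (x)_(j+i). Comparing coefficients gives
  W(l+n,t) = sum_j sum_k C(n,k) W(l,j) (m j)^(n-k) W(k,t-j),
  and summing against x^t yields the identity for the Dowling polynomials.\<close>

fun whitney_rec :: "nat \<Rightarrow> real \<Rightarrow> nat \<Rightarrow> nat \<Rightarrow> real" where
  "whitney_rec m r 0 k = (if k = 0 then 1 else 0)"
| "whitney_rec m r (Suc n) k =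
     (if k = 0 then 0 else whitney_rec m r n (k - 1)) + (real m * real k + r) * whitney_rec m r n k"

lemma whitney_rec_eq_0: "n < k \<Longrightarrow> whitney_rec m r n k = 0"
  by (induction n arbitrary: k) auto

lemma falling_fact_Suc: "falling_fact x (Suc k) = falling_fact x k * (x - real k)"
  by (simp add: falling_fact_def)

lemma falling_fact_add: "falling_fact x (j + i) = falling_fact x j * falling_fact (x - real j) i"
  by (induction i) (auto simp: falling_fact_def algebra_simps)

lemma falling_fact_of_nat_eq_0: "j < k \<Longrightarrow> falling_fact (real j) k = 0"
  unfolding falling_fact_def by (rule prod_zero) auto

lemma falling_fact_of_nat_self_neq_0: "falling_fact (real j) j \<noteq> 0"
  unfolding falling_fact_def by (auto simp: prod_zero_iff)

lemma pow_eq_whitney_rec_expansion: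
  "(real m * x + r) ^ n = (\<Sum>k\<le>n. whitney_rec m r n k * real m ^ k * falling_fact x k)"
proof (induction n)
  case 0
  then show ?case by (simp add: falling_fact_def)
next
  case (Suc n)
  let ?W = "whitney_rec m r n"
  have step: "(real m * x + r) * (?W k * real m ^ k * falling_fact x k)
      = ?W k * real m ^ Suc k * falling_fact x (Suc k)
        + (real m * real k + r) * ?W k * real m ^ k * falling_fact x k" for k
    by (simp add: falling_fact_Suc algebra_simps)
  have "(real m * x + r) ^ Suc n = (\<Sum>k\<le>n. (real m * x + r) * (?W k * real m ^ k * falling_fact x k))"
    using Suc by (simp add: sum_distrib_left)
  also have "\<dots> = (\<Sum>k\<le>n. ?W k * real m ^ Suc k * falling_fact x (Suc k))
        + (\<Sum>k\<le>n. (real m * real k + r) * ?W k * real m ^ k * falling_fact x k)"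
    by (simp add: step sum.distrib)
  also have "(\<Sum>k\<le>n. ?W k * real m ^ Suc k * falling_fact x (Suc k))
      = (\<Sum>k\<le>Suc n. (if k = 0 then 0 else ?W (k - 1)) * real m ^ k * falling_fact x k)"
    by (subst sum.atMost_Suc_shift) simp
  also have "(\<Sum>k\<le>n. (real m * real k + r) * ?W k * real m ^ k * falling_fact x k)
      = (\<Sum>k\<le>Suc n. (real m * real k + r) * ?W k * real m ^ k * falling_fact x k)"
    by (simp add: whitney_rec_eq_0)
  finally show ?case by (simp add: sum.distrib[symmetric] algebra_simps)
qed

lemma falling_fact_coeffs_eq_0:
  assumes "\<And>j. (\<Sum>k\<le>n. c k * falling_fact (real j) k) = 0" and "k \<le> n"
  shows "c k = 0"
  using \<open>k \<le> n\<close>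
proof (induction k rule: less_induct)
  case (less j)
  have "0 = (\<Sum>k\<le>n. c k * falling_fact (real j) k)"
    using assms(1) by simp
  also have "\<dots> = c j * falling_fact (real j) j + (\<Sum>k\<in>{..n} - {j}. c k * falling_fact (real j) k)"
    using less.prems by (simp add: sum.remove)
  also have "(\<Sum>k\<in>{..n} - {j}. c k * falling_fact (real j) k) = 0"
    using less.IH by (intro sum.neutral) (auto simp: falling_fact_of_nat_eq_0 nat_neq_iff)
  finally show ?case
    using falling_fact_of_nat_self_neq_0[of j] by simp
qed

lemma whitney_rec_unique:
  assumes "m \<noteq> 0" and "\<forall>k>n. c k = 0"
    and "\<forall>x. (real m * x + r) ^ n = (\<Sum>k\<le>n. c k * real m ^ k * falling_fact x k)"
  shows "c = whitney_rec m r n"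
proof
  fix k
  have "(\<Sum>k\<le>n. ((c k - whitney_rec m r n k) * real m ^ k) * falling_fact x k) = 0" for x
    using assms(3) pow_eq_whitney_rec_expansion[of m x r n]
    by (simp add: algebra_simps sum_subtractf)
  then have "k \<le> n \<Longrightarrow> (c k - whitney_rec m r n k) * real m ^ k = 0"
    by (rule falling_fact_coeffs_eq_0)
  then show "c k = whitney_rec m r n k"
    using assms(1,2) whitney_rec_eq_0[of n k] by (cases "k \<le> n") auto
qed

lemma whitney2_eq_whitney_rec:
  assumes "m \<noteq> 0"
  shows "whitney2 m r n = whitney_rec m r n"
  unfolding whitney2_def
proof (rule the_equality)
  show "(\<forall>k>n. whitney_rec m r n k = 0) \<and>
      (\<forall>x. (real m * x + r) ^ n = (\<Sum>k\<le>n. whitney_rec m r n k * real m ^ k * falling_fact x k))"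
    by (simp add: whitney_rec_eq_0 pow_eq_whitney_rec_expansion)
qed (use whitney_rec_unique[OF assms] in blast)

lemma sum_atMost_shift_if:
  fixes f g :: "nat \<Rightarrow> real"
  assumes "j + k \<le> N" and "\<forall>i>k. f i = 0"
  shows "(\<Sum>t\<le>N. if j \<le> t then f (t - j) * g t else 0) = (\<Sum>i\<le>k. f i * g (i + j))"
proof -
  have "(\<Sum>t\<le>N. if j \<le> t then f (t - j) * g t else 0) = (\<Sum>t\<in>{j..N}. f (t - j) * g t)"
    by (rule sum.mono_neutral_cong_right) auto
  also have "\<dots> = (\<Sum>i\<in>{0..N - j}. f i * g (i + j))"
    using assms(1) by (intro sum.reindex_bij_witness[where i="\<lambda>i. i + j" and j="\<lambda>t. t - j"]) auto
  also have "\<dots> = (\<Sum>i\<le>k. f i * g (i + j))"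
    using assms by (intro sum.mono_neutral_right) auto
  finally show ?thesis .
qed

text \<open>The coefficient row of (m x + r)^(l+n) produced by the split
  m x + r = (m (x - j) + r) + m j.\<close>
definition whitney_conv :: "nat \<Rightarrow> real \<Rightarrow> nat \<Rightarrow> nat \<Rightarrow> nat \<Rightarrow> real" where
  "whitney_conv m r l n t =
     (\<Sum>j\<le>l. \<Sum>k\<le>n. real (n choose k) * whitney_rec m r l j * (real m * real j) ^ (n - k)
        * (if j \<le> t then whitney_rec m r k (t - j) else 0))"

lemma whitney_conv_eq_0: "l + n < t \<Longrightarrow> whitney_conv m r l n t = 0"
  unfolding whitney_conv_def by (intro sum.neutral ballI) (auto simp: whitney_rec_eq_0)

lemma sum_whitney_conv:
  fixes g :: "nat \<Rightarrow> real"
  shows "(\<Sum>t\<le>l+n. whitney_conv m r l n t * g t) =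
    (\<Sum>j\<le>l. \<Sum>k\<le>n. real (n choose k) * whitney_rec m r l j * (real m * real j) ^ (n - k)
        * (\<Sum>i\<le>k. whitney_rec m r k i * g (i + j)))"
proof -
  let ?c = "\<lambda>j k. real (n choose k) * whitney_rec m r l j * (real m * real j) ^ (n - k)"
  have "(\<Sum>t\<le>l+n. whitney_conv m r l n t * g t) =
      (\<Sum>t\<le>l+n. \<Sum>j\<le>l. \<Sum>k\<le>n. ?c j k * (if j \<le> t then whitney_rec m r k (t - j) * g t else 0))"
    unfolding whitney_conv_def sum_distrib_right by (intro sum.cong refl) simp
  also have "\<dots> = (\<Sum>j\<le>l. \<Sum>k\<le>n. \<Sum>t\<le>l+n. ?c j k * (if j \<le> t then whitney_rec m r k (t - j) * g t else 0))"
    by (subst sum.swap) (simp add: sum.swap[of _ "{..n}"])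
  also have "\<dots> = (\<Sum>j\<le>l. \<Sum>k\<le>n. ?c j k * (\<Sum>t\<le>l+n. if j \<le> t then whitney_rec m r k (t - j) * g t else 0))"
    by (simp only: sum_distrib_left)
  also have "\<dots> = (\<Sum>j\<le>l. \<Sum>k\<le>n. ?c j k * (\<Sum>i\<le>k. whitney_rec m r k i * g (i + j)))"
  proof (intro sum.cong refl)
    fix j k assume "j \<in> {..l}" "k \<in> {..n}"
    then have "(\<Sum>t\<le>l+n. if j \<le> t then whitney_rec m r k (t - j) * g t else 0)
        = (\<Sum>i\<le>k. whitney_rec m r k i * g (i + j))"
      by (intro sum_atMost_shift_if) (auto simp: whitney_rec_eq_0)
    then show "?c j k * (\<Sum>t\<le>l+n. if j \<le> t then whitney_rec m r k (t - j) * g t else 0)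
        = ?c j k * (\<Sum>i\<le>k. whitney_rec m r k i * g (i + j))"
      by (rule arg_cong)
  qed
  finally show ?thesis .
qed

lemma falling_fact_mult_pow_eq_whitney_rec_expansion:
  "real m ^ j * falling_fact x j * (real m * (x - real j) + r) ^ k =
    (\<Sum>i\<le>k. whitney_rec m r k i * (real m ^ (i + j) * falling_fact x (i + j)))"
  by (simp add: pow_eq_whitney_rec_expansion[of m "x - real j" r k] sum_distrib_left
      falling_fact_add[of x j] add.commute[of _ j] power_add mult_ac)

lemma pow_add_eq_whitney_conv_expansion:
  fixes m l n :: nat and r x :: real
  shows "(real m * x + r) ^ (l + n) = (\<Sum>t\<le>l+n. whitney_conv m r l n t * real m ^ t * falling_fact x t)"
proof -
  have binomial: "(real m * x + r) ^ n =
      (\<Sum>k\<le>n. real (n choose k) * (real m * (x - real j) + r) ^ k * (real m * real j) ^ (n - k))"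
    for j
    using binomial_ring[of "real m * (x - real j) + r" "real m * real j" n]
    by (simp add: algebra_simps)
  have "(\<Sum>t\<le>l+n. whitney_conv m r l n t * real m ^ t * falling_fact x t) =
    (\<Sum>j\<le>l. \<Sum>k\<le>n. real (n choose k) * whitney_rec m r l j * (real m * real j) ^ (n - k)
        * (\<Sum>i\<le>k. whitney_rec m r k i * (real m ^ (i + j) * falling_fact x (i + j))))"
    using sum_whitney_conv[where g="\<lambda>t. real m ^ t * falling_fact x t"] by (simp add: mult.assoc)
  also have "\<dots> = (\<Sum>j\<le>l. whitney_rec m r l j * real m ^ j * falling_fact x j
      * (\<Sum>k\<le>n. real (n choose k) * (real m * (x - real j) + r) ^ k * (real m * real j) ^ (n - k)))"
    unfolding falling_fact_mult_pow_eq_whitney_rec_expansion[symmetric]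
    by (simp add: sum_distrib_left mult_ac)
  also have "\<dots> = (\<Sum>j\<le>l. whitney_rec m r l j * real m ^ j * falling_fact x j * (real m * x + r) ^ n)"
    by (simp only: binomial[symmetric])
  also have "\<dots> = (real m * x + r) ^ (l + n)"
    by (simp add: pow_eq_whitney_rec_expansion[of m x r l] sum_distrib_right power_add)
  finally show ?thesis ..
qed

lemma whitney_rec_add:
  assumes "m \<noteq> 0"
  shows "whitney_rec m r (l + n) = whitney_conv m r l n"
  using whitney_rec_unique[OF assms, of "l + n" "whitney_conv m r l n"]
  by (simp add: whitney_conv_eq_0 pow_add_eq_whitney_conv_expansion)

theorem mainTheorem10:
  fixes m l n :: nat and r x :: real
  assumes "m \<ge> 1" and "r \<ge> 0"
  shows "dowling m r (l + n) x =
    (\<Sum>j\<le>l. \<Sum>k\<le>n. real (n choose k) * whitney2 m r l j * x ^ j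
        * (real m * real j) ^ (n - k) * dowling m r k x)"
proof -
  have m: "m \<noteq> 0" using assms(1) by simp
  have "dowling m r (l + n) x = (\<Sum>t\<le>l+n. whitney_conv m r l n t * x ^ t)"
    by (simp add: dowling_def whitney2_eq_whitney_rec[OF m] whitney_rec_add[OF m])
  also have "\<dots> = (\<Sum>j\<le>l. \<Sum>k\<le>n. real (n choose k) * whitney_rec m r l j * (real m * real j) ^ (n - k)
        * (\<Sum>i\<le>k. whitney_rec m r k i * x ^ (i + j)))"
    by (rule sum_whitney_conv)
  also have "\<dots> = (\<Sum>j\<le>l. \<Sum>k\<le>n. real (n choose k) * whitney2 m r l j * x ^ j
        * (real m * real j) ^ (n - k) * dowling m r k x)"
    by (simp add: dowling_def whitney2_eq_whitney_rec[OF m] sum_distrib_left power_add mult_ac)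
  finally show ?thesis .
qed

end
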